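(* Let $\mathbf{h}\in\mathbb{F}_2^n$ and let $\mathbf{H}$ be the $m\times n$ binary matrix, $1\le m\le n$, whose $r$-th row ($r=1,\ldots,m$) is the cyclic shift of $\mathbf{h}$ to the right by $r-1$ positions. For $1\le\sigma\le n$ let $\Sigma_{\sigma,r}$ be the set of $\sigma$-subsets of columns resolved by row $r$. Then the number of $\sigma$-subsets of columns resolved by $\mathbf{H}$ satisfies $$\Big|\bigcup_{r=1}^m\Sigma_{\sigma,r}\Big|\;\le\; m\,|\Sigma_{\sigma,1}|-\frac{2}{m}\sum_{\kappa=1}^{m-1}(m-\kappa)\,|\Sigma_{\sigma,1}\cap\Sigma_{\sigma,1+\kappa}|.$$
   Context: A row of a binary matrix resolves a set $I$ of column indices if its restriction to the columns in $I$ has Hamming weight exactly one. *)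

theory Defs
  imports Main Complex_Main
begin

text \<open>Binary vectors of length n are modelled as functions nat \<Rightarrow> bool on indices {0..<n}
 (True = 1). Rows and columns are 0-indexed: row r (r = 0..m-1) corresponds to row r+1 of the paper.\<close>

definition shift_row :: "nat \<Rightarrow> (nat \<Rightarrow> bool) \<Rightarrow> nat \<Rightarrow> nat \<Rightarrow> bool" where
  "shift_row n h r j = h (nat ((int j - int r) mod int n))"

definition circ_matrix :: "nat \<Rightarrow> (nat \<Rightarrow> bool) \<Rightarrow> nat \<Rightarrow> nat \<Rightarrow> bool" where
  "circ_matrix n h r j = shift_row n h r j"

definition resolves :: "(nat \<Rightarrow> bool) \<Rightarrow> nat set \<Rightarrow> bool" where
  "resolves row I \<longleftrightarrow> card {j \<in> I. row j} = 1"

definition resolved_sets :: "nat \<Rightarrow> (nat \<Rightarrow> bool) \<Rightarrow> nat \<Rightarrow> nat set set" where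
  "resolved_sets n row \<sigma> = {I. I \<subseteq> {0..<n} \<and> card I = \<sigma> \<and> resolves row I}"

end

theory Submission
  imports Defs "HOL-Number_Theory.Cong"
begin

text \<open>For finite sets \<open>A r\<close>, \<open>r < m\<close>, let \<open>N x\<close> be the number of sets containing \<open>x\<close>.
  Every \<open>x\<close> in the union has \<open>1 \<le> N x \<le> m\<close>, hence \<open>(N x - 1)(m - N x) \<ge> 0\<close>, i.e.
  \<open>1 \<le> N x - N x (N x - 1) / m\<close>. Summing over the union and double counting gives
  \<open>|\<Union> A r| \<le> \<Sum> |A r| - (2/m) \<Sum>\<^sub>a\<^sub><\<^sub>b |A a \<inter> A b|\<close>.
  For the rows of a circulant matrix, rotating the columns by \<open>r\<close> maps the sets resolved by row
  \<open>k\<close> bijectively onto those resolved by row \<open>k + r\<close>, so \<open>|\<Sigma>\<^sub>a \<inter> \<Sigma>\<^sub>b|\<close> depends only on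
  \<open>b - a\<close>; there are \<open>m - \<kappa>\<close> pairs \<open>a < b < m\<close> with \<open>b - a = \<kappa>\<close>.\<close>

lemma square_sum_lessThan:
  fixes f :: "nat \<Rightarrow> 'a::comm_semiring_1"
  shows "(\<Sum>r<m. f r)\<^sup>2 = (\<Sum>r<m. (f r)\<^sup>2) + 2 * (\<Sum>b<m. \<Sum>a<b. f a * f b)"
proof (induction m)
  case 0
  then show ?case by simp
next
  case (Suc m)
  have "(\<Sum>r<Suc m. f r)\<^sup>2 = (\<Sum>r<m. f r)\<^sup>2 + (f m)\<^sup>2 + 2 * ((\<Sum>r<m. f r) * f m)"
    by (simp add: power2_sum mult.assoc)
  also have "\<dots> = ((\<Sum>r<m. (f r)\<^sup>2) + (f m)\<^sup>2) + 2 * ((\<Sum>b<m. \<Sum>a<b. f a * f b) + (\<Sum>a<m. f a * f m))"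
    by (simp add: Suc.IH sum_distrib_right distrib_left add_ac)
  also have "\<dots> = (\<Sum>r<Suc m. (f r)\<^sup>2) + 2 * (\<Sum>b<Suc m. \<Sum>a<b. f a * f b)"
    by simp
  finally show ?case .
qed

lemma one_le_multiplicity_bound:
  fixes N m :: real
  assumes "1 \<le> N" and "N \<le> m"
  shows "1 \<le> N - (N\<^sup>2 - N) / m"
proof -
  have "0 \<le> (N - 1) * (m - N)"
    using assms by simp
  then have "m \<le> m * N - (N\<^sup>2 - N)"
    by (simp add: algebra_simps power2_eq_square)
  then show ?thesis
    using assms by (simp add: field_simps)
qed

lemma card_UN_le_sum_card_minus_pairs:
  fixes A :: "nat \<Rightarrow> 'a set"
  assumes fin: "finite (\<Union>r<m. A r)" and m: "0 < m"
  shows "real (card (\<Union>r<m. A r))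
    \<le> (\<Sum>r<m. real (card (A r))) - 2 / real m * (\<Sum>b<m. \<Sum>a<b. real (card (A a \<inter> A b)))"
proof -
  define U where "U = (\<Union>r<m. A r)"
  define ind :: "nat \<Rightarrow> 'a \<Rightarrow> real" where "ind r x = of_bool (x \<in> A r)" for r x
  define N where "N x = (\<Sum>r<m. ind r x)" for x
  define Q where "Q x = (\<Sum>b<m. \<Sum>a<b. ind a x * ind b x)" for x
  have finU: "finite U"
    using fin by (simp add: U_def)
  have count_singles: "(\<Sum>x\<in>U. ind r x) = real (card (A r))" if "r < m" for r
  proof -
    have "U \<inter> {x. x \<in> A r} = A r"
      using that by (auto simp: U_def)
    then show ?thesis
      using finU by (simp add: ind_def)
  qed
  have count_pairs: "(\<Sum>x\<in>U. ind a x * ind b x) = real (card (A a \<inter> A b))" if "a < m" for a b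
  proof -
    have "U \<inter> {x. x \<in> A a \<and> x \<in> A b} = A a \<inter> A b"
      using that by (auto simp: U_def)
    then show ?thesis
      using finU by (simp add: ind_def flip: of_bool_conj)
  qed
  have pointwise: "1 \<le> N x - 2 / real m * Q x" if "x \<in> U" for x
  proof -
    obtain r where r: "r < m" "x \<in> A r"
      using \<open>x \<in> U\<close> by (auto simp: U_def)
    have "ind r x \<le> N x"
      unfolding N_def using r by (intro member_le_sum) (auto simp: ind_def)
    then have "1 \<le> N x"
      using r by (simp add: ind_def)
    moreover have "N x \<le> real m"
      using sum_mono[of "{..<m}" "\<lambda>r. ind r x" "\<lambda>_. 1"] by (simp add: N_def ind_def)
    moreover have "(ind r x)\<^sup>2 = ind r x" for r
      by (simp add: ind_def)
    then have "(N x)\<^sup>2 = N x + 2 * Q x"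
      unfolding N_def Q_def square_sum_lessThan by simp
    ultimately show ?thesis
      using one_le_multiplicity_bound[of "N x" "real m"] by simp
  qed
  have sum_N: "(\<Sum>x\<in>U. N x) = (\<Sum>r<m. real (card (A r)))"
    unfolding N_def by (subst sum.swap) (simp add: count_singles)
  have "(\<Sum>x\<in>U. Q x) = (\<Sum>b<m. \<Sum>x\<in>U. \<Sum>a<b. ind a x * ind b x)"
    unfolding Q_def by (rule sum.swap)
  also have "\<dots> = (\<Sum>b<m. \<Sum>a<b. \<Sum>x\<in>U. ind a x * ind b x)"
    by (intro sum.cong refl sum.swap)
  also have "\<dots> = (\<Sum>b<m. \<Sum>a<b. real (card (A a \<inter> A b)))"
    using count_pairs by (intro sum.cong refl) simp
  finally have sum_Q: "(\<Sum>x\<in>U. Q x) = (\<Sum>b<m. \<Sum>a<b. real (card (A a \<inter> A b)))" .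
  have "real (card U) \<le> (\<Sum>x\<in>U. N x - 2 / real m * Q x)"
    using sum_mono[OF pointwise] by simp
  also have "\<dots> = (\<Sum>x\<in>U. N x) - 2 / real m * (\<Sum>x\<in>U. Q x)"
    by (simp add: sum_subtractf sum_distrib_left)
  also have "\<dots> = (\<Sum>r<m. real (card (A r))) - 2 / real m * (\<Sum>b<m. \<Sum>a<b. real (card (A a \<inter> A b)))"
    by (simp only: sum_N sum_Q)
  finally show ?thesis
    by (simp only: U_def)
qed

lemma sum_lessThan_pairs_diff:
  fixes c :: "nat \<Rightarrow> 'a::comm_semiring_1"
  shows "(\<Sum>b<m. \<Sum>a<b. c (b - a)) = (\<Sum>\<kappa>=1..<m. of_nat (m - \<kappa>) * c \<kappa>)"
proof (induction m)
  case 0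
  then show ?case by simp
next
  case (Suc m)
  have "(\<Sum>a<m. c (m - a)) = (\<Sum>\<kappa>=1..<Suc m. c \<kappa>)"
    by (rule sum.reindex_bij_witness[of _ "\<lambda>\<kappa>. m - \<kappa>" "\<lambda>a. m - a"]) auto
  moreover have "(\<Sum>\<kappa>=1..<Suc m. of_nat (Suc m - \<kappa>) * c \<kappa>)
      = (\<Sum>\<kappa>=1..<m. of_nat (m - \<kappa>) * c \<kappa>) + (\<Sum>\<kappa>=1..<Suc m. c \<kappa>)"
    by (cases m) (simp_all add: sum.distrib[symmetric] Suc_diff_le algebra_simps)
  ultimately show ?case
    using Suc.IH by simp
qed

lemma card_Int_eq_card_Int_diff:
  fixes A :: "nat \<Rightarrow> 'a set"
  assumes shift: "\<And>k r. A (k + r) = F r ` A k"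
    and inj: "\<And>r. inj_on (F r) C" and sub: "\<And>k. A k \<subseteq> C"
    and "a \<le> b"
  shows "card (A a \<inter> A b) = card (A 0 \<inter> A (b - a))"
proof -
  have "A a = F a ` A 0"
    using shift[of 0 a] by simp
  moreover have "A b = F a ` A (b - a)"
    using shift[of "b - a" a] \<open>a \<le> b\<close> by simp
  ultimately have "A a \<inter> A b = F a ` (A 0 \<inter> A (b - a))"
    by (simp add: inj_on_image_Int[OF inj sub sub])
  moreover have "inj_on (F a) (A 0 \<inter> A (b - a))"
    using inj_on_subset[OF inj] sub by blast
  ultimately show ?thesis
    by (simp add: card_image)
qed

lemma bij_betw_rotate:
  fixes n r :: nat
  assumes "0 < n"
  shows "bij_betw (\<lambda>j. (j + r) mod n) {0..<n} {0..<n}"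
proof -
  have inj: "inj_on (\<lambda>j. (j + r) mod n) {0..<n}"
  proof (rule inj_onI)
    fix x y
    assume "x \<in> {0..<n}" "y \<in> {0..<n}" and "(x + r) mod n = (y + r) mod n"
    then show "x = y"
      using cong_add_rcancel_nat[of x r y n] by (simp add: cong_def)
  qed
  moreover have "(\<lambda>j. (j + r) mod n) ` {0..<n} = {0..<n}"
    using inj assms by (intro endo_inj_surj) auto
  ultimately show ?thesis
    by (simp add: bij_betw_def)
qed

lemma resolved_sets_bij_image:
  assumes bij: "bij_betw f {0..<n} {0..<n}" and row: "\<And>j. j < n \<Longrightarrow> row' (f j) = row j"
  shows "resolved_sets n row' \<sigma> = image f ` resolved_sets n row \<sigma>"
proof -
  have inj: "inj_on f {0..<n}"
    using bij by (simp add: bij_betw_def)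
  have image_iff: "f ` I \<in> resolved_sets n row' \<sigma> \<longleftrightarrow> I \<in> resolved_sets n row \<sigma>"
    if I: "I \<subseteq> {0..<n}" for I
  proof -
    have "inj_on f I"
      using inj_on_subset[OF inj I] .
    moreover have "{j \<in> f ` I. row' j} = f ` {j \<in> I. row j}"
      using I row by auto
    moreover have "f ` I \<subseteq> {0..<n}"
      using bij I by (auto simp: bij_betw_def)
    ultimately show ?thesis
      using I by (simp add: resolved_sets_def resolves_def card_image inj_on_subset)
  qed
  show ?thesis
  proof
    show "resolved_sets n row' \<sigma> \<subseteq> image f ` resolved_sets n row \<sigma>"
    proof
      fix J
      assume J: "J \<in> resolved_sets n row' \<sigma>"
      then have "J \<in> image f ` Pow {0..<n}"
        using bij_betw_image_Pow[OF bij] by (auto simp: resolved_sets_def bij_betw_def)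
      then obtain I where "I \<subseteq> {0..<n}" and "J = f ` I"
        by auto
      with J image_iff show "J \<in> image f ` resolved_sets n row \<sigma>"
        by blast
    qed
    show "image f ` resolved_sets n row \<sigma> \<subseteq> resolved_sets n row' \<sigma>"
      using image_iff by (auto simp: resolved_sets_def)
  qed
qed

lemma shift_row_rotate:
  assumes "0 < n"
  shows "shift_row n h (k + r) ((j + r) mod n) = shift_row n h k j"
proof -
  have "(int ((j + r) mod n) - int (k + r)) mod int n = (int j - int k) mod int n"
    by (simp add: zmod_int mod_diff_left_eq)
  then show ?thesis
    by (simp add: shift_row_def)
qed

lemma resolved_sets_circ_matrix_rotate:
  assumes "0 < n"
  shows "resolved_sets n (circ_matrix n h (k + r)) \<sigma>
    = image (\<lambda>j. (j + r) mod n) ` resolved_sets n (circ_matrix n h k) \<sigma>"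
  using assms by (intro resolved_sets_bij_image bij_betw_rotate) (simp_all add: circ_matrix_def shift_row_rotate)

lemma card_resolved_sets_circ_matrix_Int:
  assumes "0 < n" and "a \<le> b"
  shows "card (resolved_sets n (circ_matrix n h a) \<sigma> \<inter> resolved_sets n (circ_matrix n h b) \<sigma>)
    = card (resolved_sets n (circ_matrix n h 0) \<sigma> \<inter> resolved_sets n (circ_matrix n h (b - a)) \<sigma>)"
proof (rule card_Int_eq_card_Int_diff[where F = "\<lambda>r. image (\<lambda>j. (j + r) mod n)"])
  show "resolved_sets n (circ_matrix n h (k + r)) \<sigma>
      = image (\<lambda>j. (j + r) mod n) ` resolved_sets n (circ_matrix n h k) \<sigma>" for k r
    using \<open>0 < n\<close> by (rule resolved_sets_circ_matrix_rotate)
  show "inj_on (image (\<lambda>j. (j + r) mod n)) (Pow {0..<n})" for r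
    using bij_betw_rotate[OF \<open>0 < n\<close>] by (intro inj_on_image_Pow bij_betw_imp_inj_on)
  show "resolved_sets n (circ_matrix n h k) \<sigma> \<subseteq> Pow {0..<n}" for k
    by (auto simp: resolved_sets_def)
qed (fact \<open>a \<le> b\<close>)

theorem mainTheorem7:
  fixes n m \<sigma> :: nat and h :: "nat \<Rightarrow> bool"
  assumes "1 \<le> m" and "m \<le> n" and "1 \<le> \<sigma>" and "\<sigma> \<le> n"
  defines "\<Sigma> \<equiv> \<lambda>r. resolved_sets n (circ_matrix n h r) \<sigma>"
  shows "real (card (\<Union>r<m. \<Sigma> r))
    \<le> real m * real (card (\<Sigma> 0))
       - 2 / real m * (\<Sum>\<kappa>=1..m-1. real (m - \<kappa>) * real (card (\<Sigma> 0 \<inter> \<Sigma> \<kappa>)))"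
proof -
  have "0 < n"
    using assms by simp
  have sub: "\<Sigma> k \<subseteq> Pow {0..<n}" for k
    by (auto simp: \<Sigma>_def resolved_sets_def)
  have card_Int: "card (\<Sigma> a \<inter> \<Sigma> b) = card (\<Sigma> 0 \<inter> \<Sigma> (b - a))" if "a \<le> b" for a b
    unfolding \<Sigma>_def using \<open>0 < n\<close> that by (rule card_resolved_sets_circ_matrix_Int)
  have "finite (\<Union>r<m. \<Sigma> r)"
    by (rule finite_subset[of _ "Pow {0..<n}"]) (use sub in blast, simp)
  then have bound: "real (card (\<Union>r<m. \<Sigma> r))
      \<le> (\<Sum>r<m. real (card (\<Sigma> r))) - 2 / real m * (\<Sum>b<m. \<Sum>a<b. real (card (\<Sigma> a \<inter> \<Sigma> b)))"
    by (rule card_UN_le_sum_card_minus_pairs) (use assms(1) in simp)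
  have card_eq: "card (\<Sigma> r) = card (\<Sigma> 0)" for r
    using card_Int[of r r] by simp
  have sum_singles: "(\<Sum>r<m. real (card (\<Sigma> r))) = (\<Sum>r<m. real (card (\<Sigma> 0)))"
    by (intro sum.cong refl arg_cong[where f = real] card_eq)
  have "(\<Sum>b<m. \<Sum>a<b. real (card (\<Sigma> a \<inter> \<Sigma> b)))
      = (\<Sum>b<m. \<Sum>a<b. real (card (\<Sigma> 0 \<inter> \<Sigma> (b - a))))"
    by (intro sum.cong refl arg_cong[where f = real] card_Int) simp
  also have "\<dots> = (\<Sum>\<kappa>=1..<m. real (m - \<kappa>) * real (card (\<Sigma> 0 \<inter> \<Sigma> \<kappa>)))"
    by (rule sum_lessThan_pairs_diff[of "\<lambda>\<kappa>. real (card (\<Sigma> 0 \<inter> \<Sigma> \<kappa>))"])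
  also have "\<dots> = (\<Sum>\<kappa>=1..m-1. real (m - \<kappa>) * real (card (\<Sigma> 0 \<inter> \<Sigma> \<kappa>)))"
    by (intro sum.cong refl) auto
  finally show ?thesis
    using bound sum_singles by simp
qed

end
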